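(* Let $(\mathcal M,P_1,P_2)$ be a bi-Hamiltonian manifold, let $\mathcal S$ be a symplectic leaf of $P_1$, let $D=P_2(\ker P_1)$ and $E=D\cap T\mathcal S$, and let $\mathcal Q\subset\mathcal S$ be a submanifold transversal to $E$, i.e. $T_{\mathbf w}\mathcal Q\oplus E_{\mathbf w}=T_{\mathbf w}\mathcal S$ for all $\mathbf w\in\mathcal Q$. Choose coordinates on $\mathcal M$ adapted to $\mathcal Q$ (the first group of coordinates restricts to coordinates on $\mathcal Q$, and $\mathcal Q$ is given by the vanishing of the second group), and write the matrix of the Poisson pencil $P_{(\lambda)}=P_2-\lambda P_1$ in block form $$P_{(\lambda)}=\begin{pmatrix}A_{(\lambda)}&B_{(\lambda)}\\ C_{(\lambda)}&D_{(\lambda)}\end{pmatrix}.$$ Suppose that $(\ker P_1)_{\mathbf w}\cap(\ker P_2)_{\mathbf w}=\{0\}$ for all $\mathbf w\in\mathcal Q$. Then: (a) the matrix $D_{(\lambda)}$ is invertible; (b) the matrix representing the reduced Poisson pencil $P'_{(\lambda)}$ on $\mathcal Q$ is $A_{(\lambda)}-B_{(\lambda)}D_{(\lambda)}^{-1}C_{(\lambda)}$; (c) the identity $$P_{(\lambda)}=\begin{pmatrix}P'_{(\lambda)}&B_{(\lambda)}\\0&D_{(\lambda)}\end{pmatrix}\begin{pmatrix}\mathrm{Id}&0\\ D_{(\lambda)}^{-1}C_{(\lambda)}&\mathrm{Id}\end{pmatrix}$$ holds, where $\mathrm{Id}$ denotes identity matrices of the appropriate sizes.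
   Context: For a Poisson tensor $P_a$, the bracket is $\{F,G\}_a=\langle dG,P_a dF\rangle$. The reduced Poisson pencil on the transversal submanifold $\mathcal Q$ is defined as follows: given $\mathbf w\in\mathcal Q$ and $\mathbf v\in T^*_{\mathbf w}\mathcal Q$, one takes an extension $\widehat{\mathbf v}\in T^*_{\mathbf w}\mathcal M$ of $\mathbf v$ such that $(P_{(\lambda)})_{\mathbf w}\widehat{\mathbf v}\in T_{\mathbf w}\mathcal Q$ (such an extension exists), and sets $(P'_{(\lambda)})_{\mathbf w}\mathbf v=(P_{(\lambda)})_{\mathbf w}\widehat{\mathbf v}$. Equivalently, the reduced brackets are $\{f,g\}'_a(\mathbf w)=\{F,G\}_a(\mathbf w)$ for $\mathbf w\in\mathcal Q$, where $F,G$ are extensions of $f,g$ to $\mathcal M$ whose differentials vanish on $D_{\mathbf w}$ for all $\mathbf w\in\mathcal Q$. Geometric objects and the matrices representing them in the chosen coordinates are denoted by the same symbols. *)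

theory Defs
  imports "Jordan_Normal_Form.Gauss_Jordan_Elimination" "Jordan_Normal_Form.Matrix_Kernel"
begin

text \<open>Pointwise (linear-algebraic) model at a point w of Q, in coordinates adapted to Q.
  Covectors and tangent vectors at w are both represented by their coordinate vectors
  in carrier_vec n; a Poisson tensor P acts on covectors by the matrix-vector product.\<close>

definition skew_mat :: "nat \<Rightarrow> real mat \<Rightarrow> bool" where
  "skew_mat n P \<longleftrightarrow> P \<in> carrier_mat n n \<and> transpose_mat P = - P"

definition mat_image :: "nat \<Rightarrow> real mat \<Rightarrow> real vec set" where
  "mat_image n P = (\<lambda>a. P *\<^sub>v a) ` carrier_vec n"

definition pencil :: "real mat \<Rightarrow> real mat \<Rightarrow> real \<Rightarrow> real mat" where
  "pencil P1 P2 lam = P2 - lam \<cdot>\<^sub>m P1"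

text \<open>Tangent space of Q at w in adapted coordinates: the first k coordinates are
  coordinates on Q, Q is cut out by the vanishing of the remaining n-k ones.\<close>
definition adapted_tangent :: "nat \<Rightarrow> nat \<Rightarrow> real vec set" where
  "adapted_tangent n k = {v \<in> carrier_vec n. \<forall>i. k \<le> i \<and> i < n \<longrightarrow> v $ i = 0}"

definition vsum :: "real vec set \<Rightarrow> real vec set \<Rightarrow> real vec set" where
  "vsum U W = {u + w | u w. u \<in> U \<and> w \<in> W}"

definition direct_sum_eq :: "nat \<Rightarrow> real vec set \<Rightarrow> real vec set \<Rightarrow> real vec set \<Rightarrow> bool" where
  "direct_sum_eq n U W V \<longleftrightarrow> vsum U W = V \<and> U \<inter> W = {0\<^sub>v n}"

definition minv :: "real mat \<Rightarrow> real mat" where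
  "minv D = the (mat_inverse D)"

end

theory Submission
  imports Defs
begin

text \<open>If \<open>D x = 0\<close>, the covector \<open>a = (0, x)\<close> annihilates
  \<open>T Q\<close> and \<open>P_lam a = (B x, 0)\<close> is tangent to \<open>Q\<close>, hence lies in \<open>Im P1\<close>. By skew-symmetry
  \<open>a\<close> then also annihilates \<open>P2(ker P1)\<close>, so it annihilates \<open>T Q + E = Im P1\<close>, i.e.
  \<open>a \<in> ker P1\<close>. Consequently \<open>P2 a = P_lam a\<close> lies in \<open>T Q \<inter> E = 0\<close>, and
  \<open>a \<in> ker P1 \<inter> ker P2 = 0\<close>. Once \<open>D\<close> is invertible, (c) is the block LU factorisation
  through the Schur complement \<open>A - B D\<^sup>-\<^sup>1 C\<close>, and applying it to \<open>(v, y)\<close> shows that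
  \<open>P_lam (v, y)\<close> is tangent to \<open>Q\<close> exactly when \<open>y = - D\<^sup>-\<^sup>1 C v\<close>, which gives (b).\<close>

lemma mult_mat_vec_zero_vec [simp]:
  "A \<in> carrier_mat nr nc \<Longrightarrow> A *\<^sub>v 0\<^sub>v nc = (0\<^sub>v nr :: 'a :: semiring_0 vec)"
  by (intro eq_vecI) auto

lemma zero_mat_mult_vec [simp]:
  "v \<in> carrier_vec nc \<Longrightarrow> 0\<^sub>m nr nc *\<^sub>v v = (0\<^sub>v nr :: 'a :: semiring_0 vec)"
  by (intro eq_vecI) auto

lemma smult_vec_zero_vec [simp]: "c \<cdot>\<^sub>v 0\<^sub>v n = (0\<^sub>v n :: 'a :: mult_zero vec)"
  by (intro eq_vecI) auto

lemma zero_append_zero_vec: "0\<^sub>v k @\<^sub>v 0\<^sub>v m = (0\<^sub>v (k + m) :: 'a :: zero vec)"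
  by (intro eq_vecI) auto

lemma vec_first_append_vec: "v \<in> carrier_vec k \<Longrightarrow> vec_first (v @\<^sub>v w) k = v"
  by (intro eq_vecI) (auto simp: vec_first_def)

lemma skew_mat_scalar_prod_swap:
  assumes "skew_mat n P" "a \<in> carrier_vec n" "b \<in> carrier_vec n"
  shows "a \<bullet> (P *\<^sub>v b) = - (b \<bullet> (P *\<^sub>v a))"
proof -
  have P: "P \<in> carrier_mat n n" and T: "transpose_mat P = - P"
    using assms(1) unfolding skew_mat_def by auto
  have "a \<bullet> (P *\<^sub>v b) = (transpose_mat P *\<^sub>v a) \<bullet> b"
    using transpose_vec_mult_scalar[OF P assms(3) assms(2)] by simp
  also have "\<dots> = - ((P *\<^sub>v a) \<bullet> b)"
    using P assms by (simp add: T)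
  also have "(P *\<^sub>v a) \<bullet> b = b \<bullet> (P *\<^sub>v a)"
    using P assms by (intro comm_scalar_prod[of _ n]) auto
  finally show ?thesis .
qed

lemma skew_mat_kernel_eq_orthogonal_image:
  assumes "skew_mat n P"
  shows "mat_kernel P = {a \<in> carrier_vec n. \<forall>b \<in> mat_image n P. a \<bullet> b = 0}"
proof (intro equalityI subsetI)
  have P: "P \<in> carrier_mat n n" using assms unfolding skew_mat_def by auto
  fix a
  { assume a: "a \<in> mat_kernel P"
    then have "a \<in> carrier_vec n" "P *\<^sub>v a = 0\<^sub>v n" using mat_kernelD[OF P] by auto
    then show "a \<in> {a \<in> carrier_vec n. \<forall>b \<in> mat_image n P. a \<bullet> b = 0}"
      using skew_mat_scalar_prod_swap[OF assms] unfolding mat_image_def by auto }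
  { assume "a \<in> {a \<in> carrier_vec n. \<forall>b \<in> mat_image n P. a \<bullet> b = 0}"
    then have a: "a \<in> carrier_vec n" and orth: "\<And>g. g \<in> carrier_vec n \<Longrightarrow> a \<bullet> (P *\<^sub>v g) = 0"
      unfolding mat_image_def by auto
    have "P *\<^sub>v a = 0\<^sub>v n"
    proof (rule eq_vecI)
      fix i assume "i < dim_vec (0\<^sub>v n :: real vec)"
      then have i: "i < n" by simp
      have "(P *\<^sub>v a) $ i = unit_vec n i \<bullet> (P *\<^sub>v a)"
        using P i by (subst scalar_prod_left_unit) (auto simp: carrier_dim_vec)
      also have "\<dots> = 0"
        using skew_mat_scalar_prod_swap[OF assms _ a, of "unit_vec n i"] orth[of "unit_vec n i"] i
        by simp
      finally show "(P *\<^sub>v a) $ i = 0\<^sub>v n $ i" using i by simp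
    qed (use P in simp)
    then show "a \<in> mat_kernel P" using P a by (intro mat_kernelI) }
qed

lemma pencil_carrier_mat:
  "P1 \<in> carrier_mat n n \<Longrightarrow> P2 \<in> carrier_mat n n \<Longrightarrow> pencil P1 P2 lam \<in> carrier_mat n n"
  unfolding pencil_def by auto

lemma pencil_mult_mat_vec:
  assumes "P1 \<in> carrier_mat n n" "P2 \<in> carrier_mat n n" "a \<in> carrier_vec n"
  shows "pencil P1 P2 lam *\<^sub>v a = P2 *\<^sub>v a - lam \<cdot>\<^sub>v (P1 *\<^sub>v a)"
proof -
  have "(lam \<cdot>\<^sub>m P1) *\<^sub>v a = lam \<cdot>\<^sub>v (P1 *\<^sub>v a)"
    using assms by (intro eq_vecI) (auto simp: scalar_prod_def sum_distrib_left ac_simps)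
  then show ?thesis
    unfolding pencil_def using assms by (simp add: minus_mult_distrib_mat_vec[of _ n n])
qed

lemma pencil_in_image_imp_orthogonal_P2_kernel:
  assumes P1: "skew_mat n P1" and P2: "skew_mat n P2" and a: "a \<in> carrier_vec n"
    and Pa: "pencil P1 P2 lam *\<^sub>v a \<in> mat_image n P1" and \<kappa>: "\<kappa> \<in> mat_kernel P1"
  shows "a \<bullet> (P2 *\<^sub>v \<kappa>) = 0"
proof -
  have P1c: "P1 \<in> carrier_mat n n" and P2c: "P2 \<in> carrier_mat n n"
    using P1 P2 unfolding skew_mat_def by auto
  have \<kappa>c: "\<kappa> \<in> carrier_vec n" using mat_kernelD[OF P1c \<kappa>] by simp
  note \<kappa>_orth = skew_mat_kernel_eq_orthogonal_image[OF P1, THEN equalityD1, THEN subsetD, OF \<kappa>]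
  have "\<kappa> \<bullet> (pencil P1 P2 lam *\<^sub>v a) = 0" using \<kappa>_orth Pa by simp
  moreover have "\<kappa> \<bullet> (P1 *\<^sub>v a) = 0" using \<kappa>_orth a unfolding mat_image_def by simp
  ultimately have "\<kappa> \<bullet> (P2 *\<^sub>v a) = 0"
    unfolding pencil_mult_mat_vec[OF P1c P2c a]
    using \<kappa>c P1c P2c a by (simp add: scalar_prod_minus_distrib[of \<kappa> n])
  then show ?thesis using skew_mat_scalar_prod_swap[OF P2 a \<kappa>c] by simp
qed

lemma direct_sum_eq_left_subset:
  assumes "direct_sum_eq n U W V" "0\<^sub>v n \<in> W" "U \<subseteq> carrier_vec n"
  shows "U \<subseteq> V"
proof
  fix u assume "u \<in> U"
  then have "u + 0\<^sub>v n \<in> vsum U W" "u + 0\<^sub>v n = u"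
    using assms unfolding vsum_def by auto
  then show "u \<in> V" using assms(1) unfolding direct_sum_eq_def by auto
qed

lemma transversal_pencil_annihilator_trivial:
  assumes P1: "skew_mat n P1" and P2: "skew_mat n P2" and U: "U \<subseteq> carrier_vec n"
    and transversal: "direct_sum_eq n U
         ((\<lambda>a. P2 *\<^sub>v a) ` mat_kernel P1 \<inter> mat_image n P1) (mat_image n P1)"
    and kernels: "mat_kernel P1 \<inter> mat_kernel P2 = {0\<^sub>v n}"
    and a: "a \<in> carrier_vec n" and a_orth: "\<And>u. u \<in> U \<Longrightarrow> a \<bullet> u = 0"
    and Pa: "pencil P1 P2 lam *\<^sub>v a \<in> U"
  shows "a = 0\<^sub>v n"
proof -
  define W where "W = (\<lambda>a. P2 *\<^sub>v a) ` mat_kernel P1 \<inter> mat_image n P1"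
  have P1c: "P1 \<in> carrier_mat n n" and P2c: "P2 \<in> carrier_mat n n"
    using P1 P2 unfolding skew_mat_def by auto
  have sum: "vsum U W = mat_image n P1" and cap: "U \<inter> W = {0\<^sub>v n}"
    using transversal unfolding direct_sum_eq_def W_def by auto
  have "0\<^sub>v n \<in> mat_kernel P1" "0\<^sub>v n \<in> mat_image n P1"
    using P1c unfolding mat_image_def by (auto intro!: mat_kernelI image_eqI[of _ _ "0\<^sub>v n"])
  then have "0\<^sub>v n \<in> W"
    unfolding W_def using P2c by (auto intro!: image_eqI[of _ _ "0\<^sub>v n"])
  then have U_image: "U \<subseteq> mat_image n P1"
    using direct_sum_eq_left_subset[OF transversal[folded W_def] _ U] by simp
  have "a \<bullet> b = 0" if b: "b \<in> mat_image n P1" for b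
  proof -
    obtain u w where u: "u \<in> U" and w: "w \<in> W" and b_eq: "b = u + w"
      using b unfolding sum[symmetric] vsum_def by blast
    obtain \<kappa> where \<kappa>: "\<kappa> \<in> mat_kernel P1" and w_eq: "w = P2 *\<^sub>v \<kappa>"
      using w unfolding W_def by blast
    have "\<kappa> \<in> carrier_vec n" using mat_kernelD[OF P1c \<kappa>] by simp
    then have "a \<bullet> b = a \<bullet> u + a \<bullet> (P2 *\<^sub>v \<kappa>)"
      unfolding b_eq w_eq using u U a P2c by (subst scalar_prod_add_distrib[of _ n]) auto
    then show ?thesis
      using a_orth[OF u] pencil_in_image_imp_orthogonal_P2_kernel[OF P1 P2 a _ \<kappa>] Pa U_image by auto
  qed
  then have a_ker1: "a \<in> mat_kernel P1"
    unfolding skew_mat_kernel_eq_orthogonal_image[OF P1] using a by blast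
  then have "pencil P1 P2 lam *\<^sub>v a = P2 *\<^sub>v a"
    using mat_kernelD[OF P1c] pencil_mult_mat_vec[OF P1c P2c a] P2c by simp
  then have "P2 *\<^sub>v a \<in> U \<inter> W"
    using Pa U_image a_ker1 unfolding W_def by auto
  then have "a \<in> mat_kernel P2"
    using cap a P2c by (intro mat_kernelI) auto
  then show ?thesis using a_ker1 kernels by auto
qed

lemma adapted_tangent_carrier: "adapted_tangent n k \<subseteq> carrier_vec n"
  unfolding adapted_tangent_def by auto

lemma append_vec_in_adapted_tangent_iff:
  assumes "a \<in> carrier_vec k" "b \<in> carrier_vec m"
  shows "a @\<^sub>v b \<in> adapted_tangent (k + m) k \<longleftrightarrow> b = 0\<^sub>v m"
proof
  assume "a @\<^sub>v b \<in> adapted_tangent (k + m) k"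
  then have "b $ i = 0" if "i < m" for i
    using assms that unfolding adapted_tangent_def by (auto dest!: spec[of _ "k + i"])
  then show "b = 0\<^sub>v m" using assms(2) by (intro eq_vecI) auto
qed (use assms in \<open>auto simp: adapted_tangent_def\<close>)

lemma zero_append_vec_orthogonal_adapted_tangent:
  assumes "x \<in> carrier_vec m" "u \<in> adapted_tangent (k + m) k"
  shows "(0\<^sub>v k @\<^sub>v x) \<bullet> u = (0 :: real)"
  using assms unfolding adapted_tangent_def scalar_prod_def by (intro sum.neutral) auto

lemma pencil_lower_right_block_kernel_trivial:
  assumes P1: "skew_mat (k + m) P1" and P2: "skew_mat (k + m) P2"
    and transversal: "direct_sum_eq (k + m) (adapted_tangent (k + m) k)
         ((\<lambda>a. P2 *\<^sub>v a) ` mat_kernel P1 \<inter> mat_image (k + m) P1) (mat_image (k + m) P1)"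
    and kernels: "mat_kernel P1 \<inter> mat_kernel P2 = {0\<^sub>v (k + m)}"
    and blocks: "split_block (pencil P1 P2 lam) k k = (A, B, C, D)"
    and x: "x \<in> carrier_vec m" and Dx: "D *\<^sub>v x = 0\<^sub>v m"
  shows "x = 0\<^sub>v m"
proof -
  have "pencil P1 P2 lam \<in> carrier_mat (k + m) (k + m)"
    using P1 P2 unfolding skew_mat_def by (auto intro: pencil_carrier_mat)
  then have "dim_row (pencil P1 P2 lam) = k + m" "dim_col (pencil P1 P2 lam) = k + m" by auto
  note sb = split_block[OF blocks this]
  define a where "a = 0\<^sub>v k @\<^sub>v x"
  have a: "a \<in> carrier_vec (k + m)" unfolding a_def using x by auto
  have "pencil P1 P2 lam *\<^sub>v a = (B *\<^sub>v x) @\<^sub>v 0\<^sub>v m"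
    unfolding a_def sb(5) using four_block_mat_mult_vec[OF sb(1-4) _ x] sb(1-4) x Dx by auto
  then have "pencil P1 P2 lam *\<^sub>v a \<in> adapted_tangent (k + m) k"
    using append_vec_in_adapted_tangent_iff[of "B *\<^sub>v x" k] sb(2) x by auto
  then have "a = 0\<^sub>v (k + m)"
    using transversal_pencil_annihilator_trivial[OF P1 P2 adapted_tangent_carrier transversal
        kernels a zero_append_vec_orthogonal_adapted_tangent[OF x, where k = k, folded a_def]] by simp
  then show ?thesis
    unfolding a_def zero_append_zero_vec[symmetric]
    using append_vec_eq[of "0\<^sub>v k" k "0\<^sub>v k" x "0\<^sub>v m"] by simp
qed

lemma minv_of_trivial_kernel:
  assumes D: "D \<in> carrier_mat m m"
    and ker: "\<And>x. x \<in> carrier_vec m \<Longrightarrow> D *\<^sub>v x = 0\<^sub>v m \<Longrightarrow> x = 0\<^sub>v m"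
  shows "invertible_mat D" "minv D \<in> carrier_mat m m" "D * minv D = 1\<^sub>m m" "minv D * D = 1\<^sub>m m"
proof -
  have "det D \<noteq> 0" using det_0_iff_vec_prod_zero_field[OF D] ker by auto
  then have "D \<in> Units (ring_mat TYPE(real) m ())" by (rule det_non_zero_imp_unit[OF D])
  then have "mat_inverse D = Some (minv D)"
    using mat_inverse(1)[OF D, of "()"] unfolding minv_def by (cases "mat_inverse D") auto
  then show inv: "minv D \<in> carrier_mat m m" "D * minv D = 1\<^sub>m m" "minv D * D = 1\<^sub>m m"
    using mat_inverse(2)[OF D] by auto
  show "invertible_mat D"
    unfolding invertible_mat_def inverts_mat_def using D inv by auto
qed

lemma four_block_mat_schur_factorization:
  fixes A B C D Di :: "'a :: comm_ring_1 mat"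
  assumes A: "A \<in> carrier_mat r c" and B: "B \<in> carrier_mat r m"
    and C: "C \<in> carrier_mat m c" and D: "D \<in> carrier_mat m m"
    and Di: "Di \<in> carrier_mat m m" and D_Di: "D * Di = 1\<^sub>m m"
  shows "four_block_mat A B C D
    = four_block_mat (A - B * Di * C) B (0\<^sub>m m c) D
      * four_block_mat (1\<^sub>m c) (0\<^sub>m c m) (Di * C) (1\<^sub>m m)"
proof -
  have S: "A - B * Di * C \<in> carrier_mat r c" and DiC: "Di * C \<in> carrier_mat m c"
    using A B Di C by auto
  have "(A - B * Di * C) * 1\<^sub>m c + B * (Di * C) = A"
    unfolding assoc_mult_mat[OF B Di C, symmetric] right_mult_one_mat[OF S]
    using A B C by (intro eq_matI) auto
  moreover have "(A - B * Di * C) * 0\<^sub>m c m + B * 1\<^sub>m m = B"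
    using B by (simp add: right_mult_zero_mat[OF S])
  moreover have "0\<^sub>m m c * 1\<^sub>m c + D * (Di * C) = C"
    using D Di C by (simp add: assoc_mult_mat[symmetric, of D m m Di m C c] D_Di)
  moreover have "0\<^sub>m m c * 0\<^sub>m c m + D * 1\<^sub>m m = D"
    using D by simp
  ultimately show ?thesis
    by (simp only: mult_four_block_mat[OF S B zero_carrier_mat D
        one_carrier_mat zero_carrier_mat DiC one_carrier_mat])
qed

lemma four_block_mat_schur_mult_append_vec:
  fixes A B C D Di :: "'a :: comm_ring_1 mat"
  assumes A: "A \<in> carrier_mat r c" and B: "B \<in> carrier_mat r m"
    and C: "C \<in> carrier_mat m c" and D: "D \<in> carrier_mat m m"
    and Di: "Di \<in> carrier_mat m m" and D_Di: "D * Di = 1\<^sub>m m"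
    and v: "v \<in> carrier_vec c" and y: "y \<in> carrier_vec m"
  shows "four_block_mat A B C D *\<^sub>v (v @\<^sub>v y)
    = ((A - B * Di * C) *\<^sub>v v + B *\<^sub>v (Di *\<^sub>v (C *\<^sub>v v) + y))
      @\<^sub>v (D *\<^sub>v (Di *\<^sub>v (C *\<^sub>v v) + y))"
proof -
  define z where "z = Di *\<^sub>v (C *\<^sub>v v) + y"
  have S: "A - B * Di * C \<in> carrier_mat r c" and DiC: "Di * C \<in> carrier_mat m c"
    using A B Di C by auto
  have z: "z \<in> carrier_vec m" unfolding z_def using Di C v y by simp
  let ?L = "four_block_mat (A - B * Di * C) B (0\<^sub>m m c) D"
  let ?R = "four_block_mat (1\<^sub>m c) (0\<^sub>m c m) (Di * C) (1\<^sub>m m)"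
  have "?R *\<^sub>v (v @\<^sub>v y) = v @\<^sub>v z"
    unfolding four_block_mat_mult_vec[OF one_carrier_mat zero_carrier_mat DiC one_carrier_mat v y]
      z_def assoc_mult_mat_vec[OF Di C v, symmetric] using v y by simp
  moreover have "?L \<in> carrier_mat (r + m) (c + m)" "?R \<in> carrier_mat (c + m) (c + m)"
    using S B D DiC by auto
  ultimately have "four_block_mat A B C D *\<^sub>v (v @\<^sub>v y) = ?L *\<^sub>v (v @\<^sub>v z)"
    unfolding four_block_mat_schur_factorization[OF A B C D Di D_Di]
    using v y by (simp add: assoc_mult_mat_vec[of _ "r + m" "c + m" _ "c + m"])
  also have "\<dots> = ((A - B * Di * C) *\<^sub>v v + B *\<^sub>v z) @\<^sub>v (D *\<^sub>v z)"
    unfolding four_block_mat_mult_vec[OF S B zero_carrier_mat D v z] using D v z by simp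
  finally show ?thesis unfolding z_def .
qed

lemma reduced_pencil_schur_complement:
  fixes A B C D Di :: "real mat"
  assumes A: "A \<in> carrier_mat k k" and B: "B \<in> carrier_mat k m"
    and C: "C \<in> carrier_mat m k" and D: "D \<in> carrier_mat m m"
    and Di: "Di \<in> carrier_mat m m" and D_Di: "D * Di = 1\<^sub>m m" and Di_D: "Di * D = 1\<^sub>m m"
    and v: "v \<in> carrier_vec k"
  shows "(\<exists>vh \<in> carrier_vec (k + m). vec_first vh k = v
            \<and> four_block_mat A B C D *\<^sub>v vh \<in> adapted_tangent (k + m) k)
    \<and> (\<forall>vh \<in> carrier_vec (k + m). vec_first vh k = v
            \<and> four_block_mat A B C D *\<^sub>v vh \<in> adapted_tangent (k + m) k
          \<longrightarrow> four_block_mat A B C D *\<^sub>v vh = ((A - B * Di * C) *\<^sub>v v) @\<^sub>v 0\<^sub>v m)"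
proof -
  let ?M = "four_block_mat A B C D" and ?w = "Di *\<^sub>v (C *\<^sub>v v)"
  have w: "?w \<in> carrier_vec m" using Di C v by simp
  have "A - B * Di * C \<in> carrier_mat k k" using A B Di C by auto
  then have Sv: "(A - B * Di * C) *\<^sub>v v \<in> carrier_vec k" using v by simp
  have tangent_iff: "?M *\<^sub>v (v @\<^sub>v y) \<in> adapted_tangent (k + m) k \<longleftrightarrow> ?w + y = 0\<^sub>v m"
    and tangent_eq: "?w + y = 0\<^sub>v m \<Longrightarrow> ?M *\<^sub>v (v @\<^sub>v y) = ((A - B * Di * C) *\<^sub>v v) @\<^sub>v 0\<^sub>v m"
    if y: "y \<in> carrier_vec m" for y
  proof -
    have z: "?w + y \<in> carrier_vec m" using w y by simp
    note M_vy = four_block_mat_schur_mult_append_vec[OF A B C D Di D_Di v y]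
    have "D *\<^sub>v (?w + y) = 0\<^sub>v m \<longleftrightarrow> ?w + y = 0\<^sub>v m"
    proof
      assume "D *\<^sub>v (?w + y) = 0\<^sub>v m"
      then have "Di *\<^sub>v (D *\<^sub>v (?w + y)) = 0\<^sub>v m" using Di by simp
      then show "?w + y = 0\<^sub>v m"
        unfolding assoc_mult_mat_vec[OF Di D z, symmetric] Di_D using z by simp
    qed (use D in simp)
    then show "?M *\<^sub>v (v @\<^sub>v y) \<in> adapted_tangent (k + m) k \<longleftrightarrow> ?w + y = 0\<^sub>v m"
      unfolding M_vy using append_vec_in_adapted_tangent_iff A B C D Di v z
      by (metis add_carrier_vec mult_mat_vec_carrier Sv)
    show "?w + y = 0\<^sub>v m \<Longrightarrow> ?M *\<^sub>v (v @\<^sub>v y) = ((A - B * Di * C) *\<^sub>v v) @\<^sub>v 0\<^sub>v m"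
      unfolding M_vy using B D Sv by simp
  qed
  have "?w + - ?w = 0\<^sub>v m" using w by simp
  then have "v @\<^sub>v (- ?w) \<in> carrier_vec (k + m) \<and> vec_first (v @\<^sub>v (- ?w)) k = v
      \<and> ?M *\<^sub>v (v @\<^sub>v (- ?w)) \<in> adapted_tangent (k + m) k"
    using tangent_iff[of "- ?w"] vec_first_append_vec[OF v] v w by simp
  moreover have "?M *\<^sub>v vh = ((A - B * Di * C) *\<^sub>v v) @\<^sub>v 0\<^sub>v m"
    if vh: "vh \<in> carrier_vec (k + m)" "vec_first vh k = v"
      and tangent: "?M *\<^sub>v vh \<in> adapted_tangent (k + m) k" for vh
  proof -
    have vh_eq: "vh = v @\<^sub>v vec_last vh m" using vec_first_last_append[OF vh(1)] vh(2) by simp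
    show ?thesis
      using tangent tangent_iff tangent_eq vec_last_carrier by (subst vh_eq, subst (asm) vh_eq) blast
  qed
  ultimately show ?thesis by blast
qed

theorem proposition3p1:
  fixes n k :: nat and P1 P2 :: "real mat" and lam :: real
    and A B C D :: "real mat"
  assumes P1: "skew_mat n P1" and P2: "skew_mat n P2"
    and kn: "k \<le> n"
    \<comment> \<open>T_w S = Im P1, D_w = P2(ker P1), E_w = D_w \<inter> T_w S, T_w Q (+) E_w = T_w S\<close>
    and transversal: "direct_sum_eq n (adapted_tangent n k)
         ((\<lambda>a. P2 *\<^sub>v a) ` mat_kernel P1 \<inter> mat_image n P1) (mat_image n P1)"
    and kernels: "mat_kernel P1 \<inter> mat_kernel P2 = {0\<^sub>v n}"
    and blocks: "split_block (pencil P1 P2 lam) k k = (A, B, C, D)"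
  shows "invertible_mat D
    \<and> (\<forall>v \<in> carrier_vec k.
          (\<exists>vh \<in> carrier_vec n. vec_first vh k = v
              \<and> pencil P1 P2 lam *\<^sub>v vh \<in> adapted_tangent n k)
        \<and> (\<forall>vh \<in> carrier_vec n. vec_first vh k = v
              \<and> pencil P1 P2 lam *\<^sub>v vh \<in> adapted_tangent n k
              \<longrightarrow> pencil P1 P2 lam *\<^sub>v vh = ((A - B * minv D * C) *\<^sub>v v) @\<^sub>v 0\<^sub>v (n - k)))
    \<and> pencil P1 P2 lam
        = four_block_mat (A - B * minv D * C) B (0\<^sub>m (n - k) k) D
          * four_block_mat (1\<^sub>m k) (0\<^sub>m k (n - k)) (minv D * C) (1\<^sub>m (n - k))"
proof -
  obtain m where n: "n = k + m" using kn le_Suc_ex by blast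
  have "pencil P1 P2 lam \<in> carrier_mat n n"
    using P1 P2 unfolding skew_mat_def by (auto intro: pencil_carrier_mat)
  then have "dim_row (pencil P1 P2 lam) = k + m" "dim_col (pencil P1 P2 lam) = k + m"
    using n by auto
  note sb = split_block[OF blocks this]
  have "\<And>x. x \<in> carrier_vec m \<Longrightarrow> D *\<^sub>v x = 0\<^sub>v m \<Longrightarrow> x = 0\<^sub>v m"
    using pencil_lower_right_block_kernel_trivial[OF P1[unfolded n] P2[unfolded n]
        transversal[unfolded n] kernels[unfolded n] blocks] by blast
  note D_inv = minv_of_trivial_kernel[OF sb(4) this]
  show ?thesis
    unfolding n add_diff_cancel_left' sb(5)
    using D_inv(1) reduced_pencil_schur_complement[OF sb(1-4) D_inv(2-4)]
      four_block_mat_schur_factorization[OF sb(1-4) D_inv(2,3)]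
    by blast
qed

end
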